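(* Let $\Omega\subset\mathbb{R}^n$ ($n\ge 1$) be a bounded Lipschitz domain and let $b\in W^{2,\infty}(\Omega)$. For $p>0$ let $\lambda_1(p)>0$ be the principal eigenvalue of $$-\Delta u+p\,\nabla b\cdot\nabla u=\lambda u\ \text{ in }\Omega,\qquad u=0\ \text{ on }\partial\Omega .$$ Suppose there exists a potential well $\Omega'\subset\Omega$ (for the potential $b$) with depth $b_0>0$. Then $$\liminf_{p\to\infty}\frac1p\log\frac{1}{\lambda_1(p)}\ \ge\ b_0 .$$ In other words, for every $\omega\in(0,b_0)$ there exists $C>0$ such that $0<\lambda_1(p)\le Ce^{-\omega p}$ for all $p\ge 0$.
   Context: The principal eigenvalue $\lambda_1(p)$ is the unique number $\lambda$ for which the Dirichlet problem above has a solution $u\in H^1_0(\Omega)$ with $u>0$ in $\Omega$ (and $\max u=1$); equivalently $\lambda_1(p)=\min_{u\in H^1_0(\Omega)\setminus\{0\}}\frac{\int_\Omega e^{-pb}|\nabla u|^2\,dx}{\int_\Omega e^{-pb}u^2\,dx}$. A potential well for $b$ is a nonempty Lipschitz subdomain $\Omega'\subset\Omega$ such that $\min_{x\in\overline{\Omega'}}b(x)<\min_{x\in\partial\Omega'}b(x)$; its depth is $b_0:=\min_{\partial\Omega'}b-\min_{\overline{\Omega'}}b>0$. *)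

theory Defs
  imports "HOL-Analysis.Analysis"
begin

definition partial :: "('a::euclidean_space \<Rightarrow> real) \<Rightarrow> 'a \<Rightarrow> 'a \<Rightarrow> real" where
  "partial f i x = frechet_derivative f (at x) i"

fun Ck :: "nat \<Rightarrow> ('a::euclidean_space \<Rightarrow> real) \<Rightarrow> bool" where
  "Ck 0 f = continuous_on UNIV f"
| "Ck (Suc k) f = ((\<forall>x. f differentiable (at x)) \<and> continuous_on UNIV f \<and>
                    (\<forall>i\<in>Basis. Ck k (partial f i)))"

definition smooth_fun :: "('a::euclidean_space \<Rightarrow> real) \<Rightarrow> bool" where
  "smooth_fun f = (\<forall>k. Ck k f)"

definition test_fun :: "'a::euclidean_space set \<Rightarrow> ('a \<Rightarrow> real) \<Rightarrow> bool" where
  "test_fun \<Omega> \<phi> = (smooth_fun \<phi> \<and>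
     (\<exists>K. compact K \<and> K \<subseteq> \<Omega> \<and> (\<forall>x. x \<notin> K \<longrightarrow> \<phi> x = 0)))"

definition Linf_on :: "'a::euclidean_space set \<Rightarrow> ('a \<Rightarrow> real) \<Rightarrow> bool" where
  "Linf_on \<Omega> f = ((\<lambda>x. indicator \<Omega> x * f x) \<in> borel_measurable lborel \<and>
     (\<exists>M. AE x in lborel. x \<in> \<Omega> \<longrightarrow> \<bar>f x\<bar> \<le> M))"

definition weak_partial :: "'a::euclidean_space set \<Rightarrow> ('a \<Rightarrow> real) \<Rightarrow> 'a \<Rightarrow> ('a \<Rightarrow> real) \<Rightarrow> bool" where
  "weak_partial \<Omega> f i g = (\<forall>\<phi>. test_fun \<Omega> \<phi> \<longrightarrow>
     set_integrable lborel \<Omega> (\<lambda>x. f x * partial \<phi> i x) \<and>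
     set_integrable lborel \<Omega> (\<lambda>x. g x * \<phi> x) \<and>
     (LINT x:\<Omega>|lborel. f x * partial \<phi> i x) = - (LINT x:\<Omega>|lborel. g x * \<phi> x))"

definition W2inf :: "'a::euclidean_space set \<Rightarrow> ('a \<Rightarrow> real) \<Rightarrow> bool" where
  "W2inf \<Omega> b = (Linf_on \<Omega> b \<and>
     (\<forall>i\<in>Basis. \<exists>Di. Linf_on \<Omega> Di \<and> weak_partial \<Omega> b i Di \<and>
        (\<forall>j\<in>Basis. \<exists>Dij. Linf_on \<Omega> Dij \<and> weak_partial \<Omega> Di j Dij)))"

(* Lipschitz boundary: near every boundary point, \<Omega> is the region below the graph
   of a Lipschitz function over the hyperplane orthogonal to some unit vector e *)
definition lipschitz_boundary :: "'a::euclidean_space set \<Rightarrow> bool" where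
  "lipschitz_boundary \<Omega> = (\<forall>x\<in>frontier \<Omega>. \<exists>r>0. \<exists>e L \<gamma>.
     norm e = 1 \<and> L-lipschitz_on {z. e \<bullet> z = 0} \<gamma> \<and>
     \<Omega> \<inter> ball x r = {y \<in> ball x r. e \<bullet> y < \<gamma> (y - (e \<bullet> y) *\<^sub>R e)})"

definition lipschitz_domain :: "'a::euclidean_space set \<Rightarrow> bool" where
  "lipschitz_domain \<Omega> = (bounded \<Omega> \<and> open \<Omega> \<and> connected \<Omega> \<and> \<Omega> \<noteq> {} \<and> lipschitz_boundary \<Omega>)"

definition grad_sq :: "('a::euclidean_space \<Rightarrow> real) \<Rightarrow> 'a \<Rightarrow> real" where
  "grad_sq u x = (\<Sum>i\<in>Basis. (partial u i x)\<^sup>2)"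

(* Principal Dirichlet eigenvalue via the weighted Rayleigh quotient; the minimum over
   H^1_0(\<Omega>) equals the infimum over the dense subspace C_c^\<infinity>(\<Omega>). *)
definition lambda1 :: "'a::euclidean_space set \<Rightarrow> ('a \<Rightarrow> real) \<Rightarrow> real \<Rightarrow> real" where
  "lambda1 \<Omega> b p = (INF u \<in> {u. test_fun \<Omega> u \<and> (\<exists>x. u x \<noteq> 0)}.
      (LINT x:\<Omega>|lborel. exp (- p * b x) * grad_sq u x) /
      (LINT x:\<Omega>|lborel. exp (- p * b x) * (u x)\<^sup>2))"

definition potential_well :: "'a::euclidean_space set \<Rightarrow> ('a \<Rightarrow> real) \<Rightarrow> 'a set \<Rightarrow> bool" where
  "potential_well \<Omega> b \<Omega>' = (\<Omega>' \<subseteq> \<Omega> \<and> lipschitz_domain \<Omega>' \<and>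
     (INF x\<in>closure \<Omega>'. b x) < (INF x\<in>frontier \<Omega>'. b x))"

definition well_depth :: "('a::euclidean_space \<Rightarrow> real) \<Rightarrow> 'a set \<Rightarrow> real" where
  "well_depth b \<Omega>' = (INF x\<in>frontier \<Omega>'. b x) - (INF x\<in>closure \<Omega>'. b x)"

end

theory Submission
  imports Defs "HOL-Computational_Algebra.Polynomial"
begin

text \<open>Take a smooth cut-off \<open>u\<close> that equals \<open>1\<close> on a neighbourhood of the sublevel set
  \<open>{b \<le> \<beta>}\<close> of the well, with \<open>\<beta>\<close> just below the rim, and is supported in the well. Its
  gradient lives where \<open>b > \<beta>\<close>, so the weighted Dirichlet energy is \<open>O(exp(-p \<beta>))\<close>, whereas the
  weighted \<open>L\<^sup>2\<close> norm is at least \<open>exp(-p \<alpha>)\<close> times the volume of a small ball around the bottom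
  of the well, where \<open>b \<le> \<alpha>\<close> with \<open>\<alpha>\<close> just above the minimum. Hence
  \<open>\<lambda>\<^sub>1(p) \<le> C exp(-(\<beta> - \<alpha>) p)\<close> with \<open>\<beta> - \<alpha>\<close> as close to the depth as we like, and the bound on the
  \<open>liminf\<close> follows by taking logarithms. Positivity of \<open>\<lambda>\<^sub>1(p)\<close> holds because \<open>b\<close> is bounded on
  \<open>closure \<Omega>\<close>, so a Poincare inequality bounds all Rayleigh quotients from below.\<close>

section \<open>Smooth functions\<close>

lemma partial_eqI:
  assumes "(f has_derivative D) (at x)"
  shows "partial f i x = D i"
  using frechet_derivative_at[OF assms] by (simp add: partial_def)

lemma Ck_SucD: "Ck (Suc k) f \<Longrightarrow> Ck k f"
proof (induction k arbitrary: f)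
  case (Suc k)
  then show ?case by simp
qed simp

lemma Ck_continuous_on: "Ck k f \<Longrightarrow> continuous_on UNIV f"
  by (cases k) auto

lemma Ck_has_derivative:
  "Ck (Suc k) f \<Longrightarrow> (f has_derivative frechet_derivative f (at x)) (at x)"
  by (simp add: frechet_derivative_works[symmetric])

lemma Ck_const: "Ck k (\<lambda>x::'a::euclidean_space. c)"
proof (induction k arbitrary: c)
  case (Suc k)
  have "partial (\<lambda>x::'a. c) i = (\<lambda>x. 0)" for i
    by (rule ext, rule partial_eqI) (auto intro: derivative_eq_intros)
  with Suc show ?case by simp
qed simp

lemma Ck_add: "Ck k f \<Longrightarrow> Ck k g \<Longrightarrow> Ck k (\<lambda>x. f x + g x)"
proof (induction k arbitrary: f g)
  case (Suc k)
  have "partial (\<lambda>x. f x + g x) i = (\<lambda>x. partial f i x + partial g i x)" for i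
  proof
    fix x
    show "partial (\<lambda>x. f x + g x) i x = partial f i x + partial g i x"
      using Suc.prems by (subst partial_eqI[OF has_derivative_add[OF Ck_has_derivative Ck_has_derivative]])
        (auto simp: partial_def)
  qed
  with Suc show ?case by (simp add: differentiable_add continuous_on_add)
qed (simp add: continuous_on_add)

lemma Ck_mult: "Ck k f \<Longrightarrow> Ck k g \<Longrightarrow> Ck k (\<lambda>x. f x * g x)"
proof (induction k arbitrary: f g)
  case (Suc k)
  have "partial (\<lambda>x. f x * g x) i = (\<lambda>x. f x * partial g i x + partial f i x * g x)" for i
  proof
    fix x
    show "partial (\<lambda>x. f x * g x) i x = f x * partial g i x + partial f i x * g x"
      using Suc.prems by (subst partial_eqI[OF has_derivative_mult[OF Ck_has_derivative Ck_has_derivative]])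
        (auto simp: partial_def)
  qed
  moreover have "Ck k f" "Ck k g"
    using Suc.prems Ck_SucD by blast+
  ultimately show ?case using Suc by (simp add: Ck_add differentiable_mult continuous_on_mult)
qed (simp add: continuous_on_mult)

lemma Ck_compose:
  fixes h :: "real \<Rightarrow> real" and q :: "'a::euclidean_space \<Rightarrow> real"
  shows "Ck k h \<Longrightarrow> Ck k q \<Longrightarrow> Ck k (\<lambda>x. h (q x))"
proof (induction k arbitrary: h q)
  case 0
  then show ?case using continuous_on_compose2[of UNIV h UNIV q] by simp
next
  case (Suc k)
  have "partial (\<lambda>x. h (q x)) i = (\<lambda>x. partial h 1 (q x) * partial q i x)" for i
  proof
    fix x
    have dh: "(h has_derivative frechet_derivative h (at (q x))) (at (q x))"
      and dq: "(q has_derivative frechet_derivative q (at x)) (at x)"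
      using Ck_has_derivative Suc.prems by blast+
    have "frechet_derivative h (at (q x)) (frechet_derivative q (at x) i) =
       frechet_derivative q (at x) i * frechet_derivative h (at (q x)) 1"
      using linear_scale[OF has_derivative_linear[OF dh], of "frechet_derivative q (at x) i" 1] by simp
    then show "partial (\<lambda>x. h (q x)) i x = partial h 1 (q x) * partial q i x"
      by (subst partial_eqI[OF diff_chain_at[OF dq dh, unfolded o_def]]) (auto simp: partial_def)
  qed
  moreover have "Ck k q" using Suc.prems(2) by (rule Ck_SucD)
  moreover have "\<forall>x. (\<lambda>x. h (q x)) differentiable at x"
    using Suc.prems differentiable_chain_at[of q _ h, unfolded o_def] by simp
  moreover have "continuous_on UNIV (\<lambda>x. h (q x))"
    using Suc.prems continuous_on_compose2[of UNIV h UNIV q] by simp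
  ultimately show ?case using Suc by (simp add: Ck_mult)
qed

lemma Ck_Suc_real:
  fixes h g :: "real \<Rightarrow> real"
  assumes "\<And>t. (h has_real_derivative g t) (at t)" "Ck k g"
  shows "Ck (Suc k) h"
proof -
  have "partial h 1 = g"
    by (rule ext, rule partial_eqI[OF has_field_derivative_imp_has_derivative[OF assms(1)], THEN trans]) simp
  moreover have "\<forall>x. h differentiable at x" using assms(1) real_differentiable_def by blast
  moreover have "continuous_on UNIV h"
    using assms(1) by (meson DERIV_isCont continuous_at_imp_continuous_on)
  ultimately show ?thesis using assms(2) by (simp add: Basis_real_def)
qed

lemma Ck_inner_affine: "Ck k (\<lambda>x::'a::euclidean_space. x \<bullet> a + c)"
proof (induction k arbitrary: a c)
  case (Suc k)
  have "partial (\<lambda>x::'a. x \<bullet> a + c) i = (\<lambda>x. x \<bullet> 0 + (i \<bullet> a))" for i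
    by (rule ext, rule partial_eqI) (auto intro!: derivative_eq_intros)
  then have "\<forall>i\<in>Basis. Ck k (partial (\<lambda>x::'a. x \<bullet> a + c) i)"
    using Suc.IH by presburger
  then show ?case by (auto intro!: derivative_intros continuous_intros)
qed (auto intro!: continuous_intros)

lemma Ck_inner_diff_self: "Ck k (\<lambda>x::'a::euclidean_space. (x - y) \<bullet> (x - y))"
proof -
  have partial_eq: "partial (\<lambda>x::'a. (x - y) \<bullet> (x - y)) i = (\<lambda>x. x \<bullet> (2 *\<^sub>R i) + (- 2 * (y \<bullet> i)))" for i
    by (rule ext, rule partial_eqI[THEN trans])
      (auto intro!: derivative_eq_intros simp: inner_diff_left inner_diff_right inner_commute)
  have "\<forall>i\<in>Basis. Ck k (partial (\<lambda>x::'a. (x - y) \<bullet> (x - y)) i)"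
    by (intro ballI, unfold partial_eq, rule Ck_inner_affine)
  then have "Ck (Suc k) (\<lambda>x::'a. (x - y) \<bullet> (x - y))"
    by (auto intro!: derivative_intros continuous_intros)
  then show ?thesis by (rule Ck_SucD)
qed

lemma Ck_sum:
  "finite F \<Longrightarrow> (\<And>y. y \<in> F \<Longrightarrow> Ck k (g y)) \<Longrightarrow> Ck k (\<lambda>x::'a::euclidean_space. \<Sum>y\<in>F. g y x)"
  by (induction F rule: finite_induct) (auto intro: Ck_add Ck_const)

lemma smooth_fun_const: "smooth_fun (\<lambda>x::'a::euclidean_space. c)"
  by (simp add: smooth_fun_def Ck_const)

lemma smooth_fun_add: "smooth_fun f \<Longrightarrow> smooth_fun g \<Longrightarrow> smooth_fun (\<lambda>x. f x + g x)"
  by (simp add: smooth_fun_def Ck_add)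

lemma smooth_fun_mult: "smooth_fun f \<Longrightarrow> smooth_fun g \<Longrightarrow> smooth_fun (\<lambda>x. f x * g x)"
  by (simp add: smooth_fun_def Ck_mult)

lemma smooth_fun_compose:
  "smooth_fun (h :: real \<Rightarrow> real) \<Longrightarrow> smooth_fun (q :: 'a::euclidean_space \<Rightarrow> real) \<Longrightarrow>
    smooth_fun (\<lambda>x. h (q x))"
  by (simp add: smooth_fun_def Ck_compose)

lemma smooth_fun_inner_affine: "smooth_fun (\<lambda>x::'a::euclidean_space. x \<bullet> a + c)"
  by (simp add: smooth_fun_def Ck_inner_affine)

lemma smooth_fun_inner_diff_self: "smooth_fun (\<lambda>x::'a::euclidean_space. (x - y) \<bullet> (x - y))"
  by (simp add: smooth_fun_def Ck_inner_diff_self)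

lemma smooth_fun_sum:
  "finite F \<Longrightarrow> (\<And>y. y \<in> F \<Longrightarrow> smooth_fun (g y)) \<Longrightarrow>
    smooth_fun (\<lambda>x::'a::euclidean_space. \<Sum>y\<in>F. g y x)"
  by (simp add: smooth_fun_def Ck_sum)

lemma smooth_fun_real_antiderivative:
  fixes h g :: "real \<Rightarrow> real"
  assumes "\<And>t. (h has_real_derivative g t) (at t)" "smooth_fun g"
  shows "smooth_fun h"
  using assms Ck_Suc_real[OF assms(1)] Ck_SucD unfolding smooth_fun_def by blast

lemma smooth_fun_has_derivative:
  "smooth_fun u \<Longrightarrow> (u has_derivative frechet_derivative u (at x)) (at x)"
  unfolding smooth_fun_def by (metis Ck_has_derivative)

lemma smooth_fun_continuous_on: "smooth_fun u \<Longrightarrow> continuous_on S u"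
  unfolding smooth_fun_def by (metis Ck_continuous_on continuous_on_subset subset_UNIV)

lemma smooth_fun_partial: "smooth_fun u \<Longrightarrow> i \<in> Basis \<Longrightarrow> smooth_fun (partial u i)"
  unfolding smooth_fun_def by (metis Ck.simps(2))

text \<open>For \<open>t > 0\<close> the derivative of \<open>P(1/t) exp(-1/t)\<close> is \<open>Q(1/t) exp(-1/t)\<close> with
  \<open>Q = X\<^sup>2 (P - P')\<close>, and all these functions are flat at \<open>0\<close>; so the family is closed
  under differentiation.\<close>

definition flat_exp :: "real poly \<Rightarrow> real \<Rightarrow> real" where
  "flat_exp P t = (if t \<le> 0 then 0 else poly P (inverse t) * exp (- inverse t))"

definition flat_exp_deriv_poly :: "real poly \<Rightarrow> real poly" where
  "flat_exp_deriv_poly P = [:0, 0, 1:] * (P - pderiv P)"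

lemma tendsto_poly_times_exp_neg:
  fixes P :: "real poly"
  shows "((\<lambda>s. poly P s * exp (- s)) \<longlongrightarrow> 0) at_top"
proof -
  have eq: "poly P s * exp (- s) = (\<Sum>i\<le>degree P. coeff P i * (s ^ i / exp s))" for s :: real
    by (simp add: poly_altdef exp_minus divide_inverse sum_distrib_right mult.assoc)
  have "((\<lambda>s::real. \<Sum>i\<le>degree P. coeff P i * (s ^ i / exp s)) \<longlongrightarrow> (\<Sum>i\<le>degree P. coeff P i * 0)) at_top"
    by (intro tendsto_sum tendsto_mult tendsto_const tendsto_power_div_exp_0)
  then show ?thesis unfolding eq by simp
qed

lemma flat_exp_has_real_derivative:
  "(flat_exp P has_real_derivative flat_exp (flat_exp_deriv_poly P) t) (at t)"
proof -
  consider "t > 0" | "t < 0" | "t = 0" by linarith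
  then show ?thesis
  proof cases
    case 1
    have "((\<lambda>t. poly P (inverse t) * exp (- inverse t)) has_real_derivative
        flat_exp (flat_exp_deriv_poly P) t) (at t)"
      by (rule DERIV_cong[OF DERIV_mult[OF DERIV_chain2[OF poly_DERIV DERIV_inverse]
            DERIV_chain2[OF DERIV_exp DERIV_minus[OF DERIV_inverse]]]])
        (use 1 in \<open>simp_all add: flat_exp_def flat_exp_deriv_poly_def algebra_simps power2_eq_square\<close>)
    then show ?thesis
      by (rule has_field_derivative_transform_within_open[of _ _ t "{0<..}"])
        (use 1 in \<open>auto simp: flat_exp_def\<close>)
  next
    case 2
    show ?thesis
      by (rule has_field_derivative_transform_within_open[of "\<lambda>_. 0" _ t "{..<0}"])
        (use 2 in \<open>auto simp: flat_exp_def\<close>)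
  next
    case 3
    have left: "((\<lambda>y. (flat_exp P y - flat_exp P 0) / (y - 0)) \<longlongrightarrow> 0) (at_left 0)"
      by (rule Lim_transform_eventually[OF tendsto_const],
          rule eventually_mono[OF eventually_at_left_real[of "-1" 0]]) (auto simp: flat_exp_def)
    have lim: "((\<lambda>y. poly (pCons 0 P) (inverse y) * exp (- inverse y)) \<longlongrightarrow> 0) (at_right 0)"
      using tendsto_poly_times_exp_neg[of "pCons 0 P", unfolded filterlim_at_top_to_right] by simp
    have right: "((\<lambda>y. (flat_exp P y - flat_exp P 0) / (y - 0)) \<longlongrightarrow> 0) (at_right 0)"
      by (rule Lim_transform_eventually[OF lim],
          rule eventually_mono[OF eventually_at_right_real[of 0 1]]) (auto simp: flat_exp_def field_simps)
    have "flat_exp (flat_exp_deriv_poly P) 0 = 0" by (simp add: flat_exp_def)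
    then show ?thesis unfolding 3 has_field_derivative_iff
      using left right filterlim_at_split by force
  qed
qed

lemma smooth_fun_flat_exp: "smooth_fun (flat_exp P)"
proof -
  have "Ck k (flat_exp P)" for k
  proof (induction k arbitrary: P)
    case 0
    show ?case using flat_exp_has_real_derivative
      by (meson Ck.simps(1) DERIV_isCont continuous_at_imp_continuous_on)
  next
    case (Suc k)
    show ?case by (rule Ck_Suc_real[OF flat_exp_has_real_derivative Suc.IH])
  qed
  then show ?thesis by (simp add: smooth_fun_def)
qed

definition exp_neg_inverse :: "real \<Rightarrow> real" where
  "exp_neg_inverse = flat_exp 1"

lemma exp_neg_inverse_pos: "t > 0 \<Longrightarrow> exp_neg_inverse t > 0"
  by (simp add: exp_neg_inverse_def flat_exp_def)

lemma exp_neg_inverse_eq_0: "t \<le> 0 \<Longrightarrow> exp_neg_inverse t = 0"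
  by (simp add: exp_neg_inverse_def flat_exp_def)

lemma exp_neg_inverse_nonneg: "exp_neg_inverse t \<ge> 0"
  by (simp add: exp_neg_inverse_def flat_exp_def)

lemma exp_neg_inverse_mono: "0 < s \<Longrightarrow> s \<le> t \<Longrightarrow> exp_neg_inverse s \<le> exp_neg_inverse t"
  by (simp add: exp_neg_inverse_def flat_exp_def le_imp_inverse_le)

lemma smooth_fun_exp_neg_inverse: "smooth_fun exp_neg_inverse"
  by (simp add: exp_neg_inverse_def smooth_fun_flat_exp)

definition interval_bump :: "real \<Rightarrow> real" where
  "interval_bump t = exp_neg_inverse t * exp_neg_inverse (1 - t)"

lemma smooth_fun_interval_bump: "smooth_fun interval_bump"
proof -
  have "smooth_fun (\<lambda>t::real. exp_neg_inverse (t \<bullet> (-1) + 1))"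
    by (rule smooth_fun_compose[OF smooth_fun_exp_neg_inverse smooth_fun_inner_affine])
  then show ?thesis unfolding interval_bump_def[abs_def]
    by (intro smooth_fun_mult[OF smooth_fun_exp_neg_inverse]) (simp add: inner_real_def)
qed

lemma interval_bump_eq_0: "t \<le> 0 \<or> t \<ge> 1 \<Longrightarrow> interval_bump t = 0"
  by (auto simp: interval_bump_def exp_neg_inverse_eq_0)

lemma interval_bump_integrable_on: "interval_bump integrable_on {a..b}"
  by (rule integrable_continuous_real[OF smooth_fun_continuous_on[OF smooth_fun_interval_bump]])

lemma integral_interval_bump_pos: "integral {-1..1} interval_bump > 0"
proof -
  have "integral {-1..1} interval_bump \<ge> 0"
    by (rule integral_nonneg[OF interval_bump_integrable_on])
      (simp add: interval_bump_def exp_neg_inverse_nonneg)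
  moreover have "integral {-1..1} interval_bump \<noteq> 0"
  proof
    assume "integral {-1..1} interval_bump = 0"
    then have "(interval_bump has_integral 0) (cbox (-1) 1)"
      using interval_bump_integrable_on[of "-1" 1] by (simp add: has_integral_integral)
    then have "interval_bump (1/2) = 0"
      by (rule has_integral_0_cbox_imp_0[OF smooth_fun_continuous_on[OF smooth_fun_interval_bump], rotated])
        (auto simp: interval_bump_def exp_neg_inverse_nonneg)
    then show False using exp_neg_inverse_pos[of "1/2"] by (simp add: interval_bump_def)
  qed
  ultimately show ?thesis by simp
qed

definition smooth_step :: "real \<Rightarrow> real" where
  "smooth_step s = integral {-1..s} interval_bump / integral {-1..1} interval_bump"

lemma integral_interval_bump_eq_0: "s \<le> 0 \<Longrightarrow> integral {-1..s} interval_bump = 0"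
  by (subst integral_cong[where g = "\<lambda>_. 0"]) (auto intro: interval_bump_eq_0)

lemma smooth_step_eq_0: "s \<le> 0 \<Longrightarrow> smooth_step s = 0"
  by (simp add: smooth_step_def integral_interval_bump_eq_0)

lemma smooth_step_eq_1: "s \<ge> 1 \<Longrightarrow> smooth_step s = 1"
proof -
  assume s: "s \<ge> 1"
  have "integral {1..s} interval_bump = integral {1..s} (\<lambda>_. 0::real)"
    by (rule integral_cong) (auto intro: interval_bump_eq_0)
  moreover have "integral {-1..1} interval_bump + integral {1..s} interval_bump =
      integral {-1..s} interval_bump"
    by (rule Henstock_Kurzweil_Integration.integral_combine) (use s interval_bump_integrable_on in auto)
  ultimately show ?thesis
    using integral_interval_bump_pos by (simp add: smooth_step_def)
qed

lemma smooth_fun_smooth_step: "smooth_fun smooth_step"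
proof -
  have "((\<lambda>s. integral {-1..s} interval_bump) has_real_derivative interval_bump t) (at t)" for t
  proof (cases "t > -1")
    case True
    have "((\<lambda>s. integral {-1..s} interval_bump) has_real_derivative interval_bump t) (at t within {-1..t+1})"
      by (rule integral_has_real_derivative[OF smooth_fun_continuous_on[OF smooth_fun_interval_bump]])
        (use True in auto)
    moreover have "t \<in> interior {-1..t+1}" using True by simp
    ultimately show ?thesis using at_within_interior by metis
  next
    case False
    show ?thesis
      by (rule has_field_derivative_transform_within_open[of "\<lambda>_. 0" _ t "{..<0}"])
        (use False in \<open>auto simp: interval_bump_eq_0 integral_interval_bump_eq_0\<close>)
  qed
  then have "smooth_fun (\<lambda>s. integral {-1..s} interval_bump)"
    by (rule smooth_fun_real_antiderivative[OF _ smooth_fun_interval_bump])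
  then show ?thesis
    using smooth_fun_mult[OF _ smooth_fun_const, of _ "inverse (integral {-1..1} interval_bump)"]
    by (simp add: smooth_step_def[abs_def] divide_inverse)
qed

section \<open>Smooth cut-off functions\<close>

lemma smooth_fun_exp_neg_inverse_ball:
  "smooth_fun (\<lambda>x::'a::euclidean_space. exp_neg_inverse (r - (x - y) \<bullet> (x - y)))"
proof -
  have "smooth_fun (\<lambda>x::'a. (-1) * ((x - y) \<bullet> (x - y)) + r)"
    by (intro smooth_fun_add smooth_fun_mult smooth_fun_const smooth_fun_inner_diff_self)
  then show ?thesis
    using smooth_fun_compose[OF smooth_fun_exp_neg_inverse] by simp
qed

text \<open>Cover \<open>K\<close> by finitely many balls \<open>B(y, d)\<close> with \<open>B(y, 2d) \<subseteq> U\<close>; the sum of the bumps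
  \<open>exp_neg_inverse (4d\<^sup>2 - |x - y|\<^sup>2)\<close> is at least \<open>exp_neg_inverse (3d\<^sup>2)\<close> on the small
  balls, so a rescaled smooth step of it is \<open>1\<close> there.\<close>

lemma smooth_urysohn:
  fixes K U :: "'a::euclidean_space set"
  assumes "compact K" "open U" "K \<subseteq> U"
  obtains u L V where "smooth_fun u" "compact L" "L \<subseteq> U" "\<And>x. x \<notin> L \<Longrightarrow> u x = 0"
    "open V" "K \<subseteq> V" "\<And>x. x \<in> V \<Longrightarrow> u x = 1"
proof -
  obtain \<epsilon> where \<epsilon>: "\<epsilon> > 0" "(\<Union>y\<in>K. cball y \<epsilon>) \<subseteq> U"
    using compact_subset_open_imp_cball_epsilon_subset[OF assms] by blast
  define d where "d = \<epsilon> / 2"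
  have d: "d > 0" using \<epsilon> by (simp add: d_def)
  obtain F where F: "F \<subseteq> K" "finite F" "K \<subseteq> (\<Union>y\<in>F. ball y d)"
    using compactE_image[OF assms(1), of K "\<lambda>y. ball y d"] d by force
  define S where "S x = (\<Sum>y\<in>F. exp_neg_inverse (4 * d\<^sup>2 - (x - y) \<bullet> (x - y)))" for x
  define s0 where "s0 = exp_neg_inverse (3 * d\<^sup>2)"
  have s0: "s0 > 0" unfolding s0_def using d by (simp add: exp_neg_inverse_pos)
  define u where "u x = smooth_step (S x * (1 / s0))" for x
  define L where "L = (\<Union>y\<in>F. cball y (2 * d))"
  define V where "V = (\<Union>y\<in>F. ball y d)"
  have "smooth_fun u"
    unfolding u_def[abs_def] S_def[abs_def]
    by (intro smooth_fun_compose[OF smooth_fun_smooth_step] smooth_fun_mult smooth_fun_const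
        smooth_fun_sum[OF F(2)] smooth_fun_exp_neg_inverse_ball)
  moreover have "compact L" unfolding L_def using F(2) by (auto intro!: compact_UN)
  moreover have "L \<subseteq> U" using F(1) \<epsilon>(2) by (force simp: L_def d_def)
  moreover have "u x = 0" if "x \<notin> L" for x
  proof -
    have "exp_neg_inverse (4 * d\<^sup>2 - (x - y) \<bullet> (x - y)) = 0" if "y \<in> F" for y
    proof -
      have "(2 * d)\<^sup>2 < (dist y x)\<^sup>2"
        using \<open>x \<notin> L\<close> that d by (intro power_strict_mono) (auto simp: L_def)
      then show ?thesis
        by (intro exp_neg_inverse_eq_0)
          (simp add: dist_norm power2_norm_eq_inner norm_minus_commute power_mult_distrib)
    qed
    then show ?thesis by (simp add: u_def S_def smooth_step_eq_0)
  qed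
  moreover have "open V" "K \<subseteq> V" using F(3) by (auto simp: V_def)
  moreover have "u x = 1" if "x \<in> V" for x
  proof -
    obtain y where y: "y \<in> F" "dist y x < d" using \<open>x \<in> V\<close> by (auto simp: V_def)
    have "(dist y x)\<^sup>2 < d\<^sup>2" using y d by (intro power_strict_mono) auto
    then have "(x - y) \<bullet> (x - y) < d\<^sup>2"
      by (simp add: dist_norm power2_norm_eq_inner norm_minus_commute)
    then have "s0 \<le> exp_neg_inverse (4 * d\<^sup>2 - (x - y) \<bullet> (x - y))"
      unfolding s0_def using d by (intro exp_neg_inverse_mono) auto
    also have "\<dots> \<le> S x" unfolding S_def
      by (rule member_le_sum[OF y(1)]) (auto simp: exp_neg_inverse_nonneg F(2))
    finally show ?thesis using s0 by (simp add: u_def smooth_step_eq_1)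
  qed
  ultimately show ?thesis using that by blast
qed

section \<open>Integrals of compactly supported functions\<close>

lemma integrable_compact_support:
  fixes g :: "'a::euclidean_space \<Rightarrow> real"
  assumes "compact K" "continuous_on K g" "\<And>x. x \<notin> K \<Longrightarrow> g x = 0"
  shows "integrable lborel g"
proof -
  have "g = (\<lambda>x. indicator K x *\<^sub>R g x)" using assms(3) by (auto simp: indicator_def fun_eq_iff)
  then show ?thesis using borel_integrable_compact[OF assms(1,2)] by simp
qed

lemma set_integral_eq_integral_if_zero_outside:
  fixes f :: "'a::euclidean_space \<Rightarrow> real"
  assumes "L \<subseteq> A" "\<And>x. x \<notin> L \<Longrightarrow> f x = 0"
  shows "(LINT x:A|lborel. f x) = integral\<^sup>L lborel f"
proof -
  have "(\<lambda>x. indicator A x *\<^sub>R f x) = f"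
    using assms by (auto simp: indicator_def fun_eq_iff)
  then show ?thesis by (simp add: set_lebesgue_integral_def)
qed

lemma bounded_compact_support:
  fixes g :: "'a::euclidean_space \<Rightarrow> real"
  assumes "continuous_on K g" "compact K" "\<And>x. x \<notin> K \<Longrightarrow> g x = 0"
  obtains M where "M \<ge> 0" "\<And>y. \<bar>g y\<bar> \<le> M"
proof -
  obtain a where a: "\<And>y. y \<in> K \<Longrightarrow> \<bar>g y\<bar> \<le> a"
    using compact_imp_bounded[OF compact_continuous_image[OF assms(1,2)]]
    unfolding bounded_real by auto
  have "\<bar>g y\<bar> \<le> max a 0" for y using a[of y] assms(3)[of y] by (cases "y \<in> K") auto
  then show ?thesis using that[of "max a 0"] by simp
qed

lemma lebesgue_integral_translate:
  fixes f :: "'a::euclidean_space \<Rightarrow> real"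
  assumes "continuous_on UNIV f"
  shows "integral\<^sup>L lborel (\<lambda>x. f (c + x)) = integral\<^sup>L lborel f"
proof -
  have "(+) c \<in> borel_measurable lborel"
    by (simp add: borel_measurable_continuous_onI continuous_intros measurable_lborel1)
  then have "integral\<^sup>L (distr lborel borel ((+) c)) f = integral\<^sup>L lborel (\<lambda>x. f (c + x))"
    by (intro integral_distr borel_measurable_continuous_onI[OF assms]) (simp_all add: measurable_lborel1)
  then show ?thesis by (simp add: lborel_distr_plus)
qed

lemma has_real_derivative_along_line:
  assumes "(f has_derivative D) (at (x + t *\<^sub>R e))"
  shows "((\<lambda>h. f (x + h *\<^sub>R e)) has_real_derivative D e) (at t)"
proof -
  have "((\<lambda>h::real. x + h *\<^sub>R e) has_derivative (\<lambda>h. h *\<^sub>R e)) (at t)"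
    by (auto intro!: derivative_eq_intros)
  from diff_chain_at[OF this assms]
  have "((\<lambda>h. f (x + h *\<^sub>R e)) has_derivative (\<lambda>h. D (h *\<^sub>R e))) (at t)"
    by (simp add: o_def)
  moreover have "D (h *\<^sub>R e) = D e * h" for h
    using linear_scale[OF has_derivative_linear[OF assms]] by simp
  ultimately show ?thesis by (simp add: has_field_derivative_def)
qed

lemma difference_along_line_le:
  assumes "\<And>y. (f has_derivative D y) (at y)" "\<And>y. \<bar>D y e\<bar> \<le> M" "h > 0"
  shows "\<bar>f (x + h *\<^sub>R e) - f x\<bar> \<le> h * M"
proof -
  let ?g = "\<lambda>\<tau>. f (x + \<tau> *\<^sub>R e)"
  have g': "(?g has_real_derivative D (x + \<tau> *\<^sub>R e) e) (at \<tau>)" for \<tau>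
    by (rule has_real_derivative_along_line[OF assms(1)])
  obtain l z where "DERIV ?g z :> l" "?g h - ?g 0 = h * l"
    using MVT[OF assms(3), of ?g] g'
    by (force intro: DERIV_isCont continuous_at_imp_continuous_on real_differentiable_def[THEN iffD2])
  moreover from this(1) have "l = D (x + z *\<^sub>R e) e" using DERIV_unique g' by blast
  ultimately show ?thesis using assms(2,3) by (simp add: abs_mult mult_left_mono)
qed

lemma has_derivative_eq_0_if_constant_on_open:
  assumes "(f has_derivative D) (at x)" "open W" "x \<in> W" "\<And>y. y \<in> W \<Longrightarrow> f y = c"
  shows "D = (\<lambda>_. 0)"
proof -
  have "(f has_derivative (\<lambda>_. 0)) (at x)"
    by (rule has_derivative_transform_within_open[OF has_derivative_const assms(2,3)])
      (use assms(4) in auto)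
  then show ?thesis using assms(1) has_derivative_unique by blast
qed

lemma shifted_eq_0_outside_ball:
  assumes "\<And>x. r < norm x \<Longrightarrow> f x = 0" "r + \<bar>h\<bar> * norm e < norm x"
  shows "f (x + h *\<^sub>R e) = 0"
proof -
  have "norm x - \<bar>h\<bar> * norm e \<le> norm (x + h *\<^sub>R e)"
    using norm_diff_ineq[of x "h *\<^sub>R e"] by simp
  then show ?thesis using assms by auto
qed

lemma difference_quotient_dominated:
  assumes der: "\<And>y. (f has_derivative D y) (at y)" and M: "\<And>y. \<bar>D y e\<bar> \<le> M"
    and f_eq_0: "\<And>x. r < norm x \<Longrightarrow> f x = 0" and t: "1 \<le> t"
  shows "\<bar>(f (x + (1/t) *\<^sub>R e) - f x) * t\<bar> \<le> indicator (cball 0 (r + norm e)) x * M"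
proof (cases "x \<in> cball 0 (r + norm e)")
  case True
  have "\<bar>f (x + (1/t) *\<^sub>R e) - f x\<bar> \<le> 1/t * M"
    using t by (intro difference_along_line_le[OF der M]) auto
  then have "\<bar>f (x + (1/t) *\<^sub>R e) - f x\<bar> * t \<le> M" using t by (simp add: field_simps)
  then show ?thesis using True t by (simp add: abs_mult)
next
  case False
  have "\<bar>1/t\<bar> * norm e \<le> norm e" using t by (simp add: divide_le_eq mult_le_cancel_left1)
  moreover have "r + norm e < norm x" using False by simp
  ultimately have "r < norm x" "r + \<bar>1/t\<bar> * norm e < norm x"
    using norm_ge_zero[of e] by linarith+
  then have "f x = 0" "f (x + (1/t) *\<^sub>R e) = 0"
    using f_eq_0 by (auto intro: shifted_eq_0_outside_ball[where r = r])
  moreover have "indicator (cball 0 (r + norm e)) x = (0::real)" using False by simp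
  ultimately show ?thesis by simp
qed

text \<open>The difference quotients \<open>(f (x + e/t) - f x) t\<close> all have integral \<open>0\<close> by translation
  invariance, are dominated by the mean value theorem, and converge to \<open>D x e\<close>.\<close>

lemma integral_directional_derivative_eq_0:
  fixes f :: "'a::euclidean_space \<Rightarrow> real"
  assumes der: "\<And>x. (f has_derivative D x) (at x)"
    and cont: "continuous_on UNIV (\<lambda>x. D x e)"
    and K: "compact K" "\<And>x. x \<notin> K \<Longrightarrow> f x = 0"
  shows "integral\<^sup>L lborel (\<lambda>x. D x e) = 0"
proof -
  have "D x e = 0" if "x \<notin> K" for x
    using has_derivative_eq_0_if_constant_on_open[OF der[of x], of "- K" 0] that K
    by (auto simp: compact_imp_closed open_Compl)
  then obtain M where M: "\<And>y. \<bar>D y e\<bar> \<le> M"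
    using bounded_compact_support[OF continuous_on_subset[OF cont] K(1)] by blast
  obtain r where "\<And>x. x \<in> K \<Longrightarrow> norm x \<le> r"
    using compact_imp_bounded[OF K(1)] unfolding bounded_iff by blast
  then have f_eq_0: "f x = 0" if "r < norm x" for x
    using K(2) that by force
  have fc: "continuous_on UNIV f"
    using der has_derivative_continuous continuous_at_imp_continuous_on by blast
  have shift_continuous: "continuous_on UNIV (\<lambda>x. f (x + h *\<^sub>R e))" for h
    by (rule continuous_on_compose2[OF fc]) (auto intro!: continuous_intros)
  have shift_integrable: "integrable lborel (\<lambda>x. f (x + h *\<^sub>R e))" for h
    by (rule integrable_compact_support[OF compact_cball[of 0 "r + \<bar>h\<bar> * norm e"]])
      (auto intro: continuous_on_subset[OF shift_continuous] shifted_eq_0_outside_ball[OF f_eq_0])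
  define s where "s t x = (f (x + (1/t) *\<^sub>R e) - f x) * t" for t x
  have integral_s: "integral\<^sup>L lborel (s t) = 0" for t
  proof -
    have "integral\<^sup>L lborel (\<lambda>x. f (x + (1/t) *\<^sub>R e) - f x) = 0"
      using lebesgue_integral_translate[OF fc, of "(1/t) *\<^sub>R e"] shift_integrable[of 0]
      by (simp add: add.commute Bochner_Integration.integral_diff[OF shift_integrable])
    then show ?thesis by (simp add: s_def[abs_def])
  qed
  have "((\<lambda>t. integral\<^sup>L lborel (s t)) \<longlongrightarrow> integral\<^sup>L lborel (\<lambda>x. D x e)) at_top"
  proof (rule integral_dominated_convergence_at_top[where w = "\<lambda>x. indicator (cball 0 (r + norm e)) x * M"])
    show "(\<lambda>x. D x e) \<in> borel_measurable lborel" "s t \<in> borel_measurable lborel" for t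
      unfolding s_def[abs_def] using cont
      by (auto intro!: borel_measurable_continuous_onI continuous_intros shift_continuous fc
          simp: measurable_lborel1)
    show "integrable lborel (\<lambda>x. indicator (cball 0 (r + norm e)) x * M)"
      by (auto intro!: emeasure_compact_finite integrable_mult_left)
    show "AE x in lborel. ((\<lambda>t. s t x) \<longlongrightarrow> D x e) at_top"
    proof (rule AE_I2)
      fix x
      have "((\<lambda>h. f (x + h *\<^sub>R e)) has_real_derivative D x e) (at 0)"
        using has_real_derivative_along_line[of f "D x" x 0 e] der[of x] by simp
      then have "((\<lambda>h. (f (x + h *\<^sub>R e) - f (x + 0 *\<^sub>R e)) / (h - 0)) \<longlongrightarrow> D x e) (at_right 0)"
        unfolding has_field_derivative_iff filterlim_at_split by blast
      note lim = filterlim_compose[OF this filterlim_inverse_at_right_top]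
      show "((\<lambda>t. s t x) \<longlongrightarrow> D x e) at_top"
        by (rule Lim_transform_eventually[OF lim], rule eventually_mono[OF eventually_gt_at_top[of 0]])
          (simp add: s_def divide_inverse)
    qed
    show "\<forall>\<^sub>F t in at_top. AE x in lborel. norm (s t x) \<le> indicator (cball 0 (r + norm e)) x * M"
    proof (intro eventually_mono[OF eventually_ge_at_top[of 1]] AE_I2)
      fix t :: real and x :: 'a
      assume "1 \<le> t"
      then show "norm (s t x) \<le> indicator (cball 0 (r + norm e)) x * M"
        unfolding s_def real_norm_def
        by (intro difference_quotient_dominated[OF der M, of r]) (use f_eq_0 in auto)
    qed
  qed
  moreover have "((\<lambda>t. integral\<^sup>L lborel (s t)) \<longlongrightarrow> 0) at_top"
    by (simp add: integral_s)
  ultimately show ?thesis by (rule tendsto_unique[OF trivial_limit_at_top_linorder])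
qed

lemma partial_eq_0_if_constant_on_open:
  assumes "smooth_fun u" "open W" "x \<in> W" "\<And>y. y \<in> W \<Longrightarrow> u y = c"
  shows "partial u i x = 0"
  using has_derivative_eq_0_if_constant_on_open[OF smooth_fun_has_derivative[OF assms(1)] assms(2-4)]
  by (simp add: partial_def)

lemma partial_eq_0_outside_support:
  assumes "smooth_fun u" "compact K" "\<And>x. x \<notin> K \<Longrightarrow> u x = 0" "x \<notin> K"
  shows "partial u i x = 0"
  using assms by (intro partial_eq_0_if_constant_on_open[of u "- K"]) (auto simp: compact_imp_closed open_Compl)

lemma grad_sq_nonneg: "grad_sq u x \<ge> 0"
  unfolding grad_sq_def by (simp add: sum_nonneg)

lemma partial_sq_le_grad_sq: "i \<in> Basis \<Longrightarrow> (partial u i x)\<^sup>2 \<le> grad_sq u x"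
  unfolding grad_sq_def by (rule member_le_sum) auto

lemma grad_sq_eq_0_if_constant_on_open:
  assumes "smooth_fun u" "open W" "x \<in> W" "\<And>y. y \<in> W \<Longrightarrow> u y = c"
  shows "grad_sq u x = 0"
  using partial_eq_0_if_constant_on_open[OF assms] by (simp add: grad_sq_def)

lemma grad_sq_eq_0_outside_support:
  assumes "smooth_fun u" "compact K" "\<And>x. x \<notin> K \<Longrightarrow> u x = 0" "x \<notin> K"
  shows "grad_sq u x = 0"
  using partial_eq_0_outside_support[OF assms] by (simp add: grad_sq_def)

lemma continuous_on_grad_sq: "smooth_fun u \<Longrightarrow> continuous_on S (grad_sq u)"
  unfolding grad_sq_def[abs_def]
  by (intro continuous_intros smooth_fun_continuous_on smooth_fun_partial) auto

text \<open>The derivative of \<open>(x \<bullet> e) u(x)\<^sup>2\<close> in direction \<open>e\<close> is \<open>u\<^sup>2 + 2 (x \<bullet> e) u \<partial>\<^sub>e u\<close> and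
  integrates to zero; the pointwise bound \<open>-2ab \<le> a\<^sup>2/2 + 2b\<^sup>2\<close> then absorbs half of \<open>\<integral> u\<^sup>2\<close>.\<close>

lemma poincare_inequality:
  fixes u :: "'a::euclidean_space \<Rightarrow> real"
  assumes u: "smooth_fun u" and K: "compact K" "\<And>x. x \<notin> K \<Longrightarrow> u x = 0"
    and e: "e \<in> Basis" and R: "\<And>x. x \<in> K \<Longrightarrow> norm x \<le> R"
  shows "integral\<^sup>L lborel (\<lambda>x. (u x)\<^sup>2) \<le> 4 * R\<^sup>2 * integral\<^sup>L lborel (\<lambda>x. (partial u e x)\<^sup>2)"
proof -
  define Du where "Du x = frechet_derivative u (at x)" for x
  have der: "(u has_derivative Du x) (at x)" for x
    unfolding Du_def by (rule smooth_fun_has_derivative[OF u])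
  have uc: "continuous_on S u" and pc: "continuous_on S (partial u e)" for S
    using u e by (auto intro: smooth_fun_continuous_on smooth_fun_partial)
  have pz: "x \<notin> K \<Longrightarrow> partial u e x = 0" for x
    using partial_eq_0_outside_support[OF u K] .
  define D where "D x h = (x \<bullet> e) * (u x * Du x h + Du x h * u x) + (h \<bullet> e) * (u x * u x)" for x h
  have "((\<lambda>x. (x \<bullet> e) * (u x * u x)) has_derivative D x) (at x)" for x
    unfolding D_def by (intro has_derivative_mult has_derivative_inner_left has_derivative_ident der)
  moreover have De: "D x e = 2 * ((x \<bullet> e) * u x * partial u e x) + (u x)\<^sup>2" for x
    using e by (simp add: D_def Du_def partial_def power2_eq_square algebra_simps)
  moreover have "continuous_on UNIV (\<lambda>x. D x e)"
    unfolding De by (intro continuous_intros uc pc)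
  ultimately have "integral\<^sup>L lborel (\<lambda>x. 2 * ((x \<bullet> e) * u x * partial u e x) + (u x)\<^sup>2) = 0"
    using integral_directional_derivative_eq_0[OF _ _ K(1), of "\<lambda>x. (x \<bullet> e) * (u x * u x)" D e] K(2)
    by simp
  moreover have i_mixed: "integrable lborel (\<lambda>x. (x \<bullet> e) * u x * partial u e x)"
    and i_u: "integrable lborel (\<lambda>x. (u x)\<^sup>2)"
    and i_partial: "integrable lborel (\<lambda>x. (partial u e x)\<^sup>2)"
    by (auto intro!: integrable_compact_support[OF K(1)] continuous_intros uc pc simp: K(2) pz)
  ultimately have sum_eq_0:
    "2 * integral\<^sup>L lborel (\<lambda>x. (x \<bullet> e) * u x * partial u e x) + integral\<^sup>L lborel (\<lambda>x. (u x)\<^sup>2) = 0"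
    by (simp add: Bochner_Integration.integral_add)
  have pointwise: "- 2 * ((x \<bullet> e) * u x * partial u e x) \<le> (u x)\<^sup>2 / 2 + 2 * R\<^sup>2 * (partial u e x)\<^sup>2" for x
  proof (cases "x \<in> K")
    case True
    define a s v where "a = u x" and "s = x \<bullet> e" and "v = partial u e x"
    have "s\<^sup>2 \<le> R\<^sup>2"
      using Basis_le_norm[OF e, of x] R[OF True] by (simp add: s_def abs_le_square_iff power2_le_iff_abs_le)
    have "- 2 * (s * a * v) \<le> a\<^sup>2 / 2 + 2 * s\<^sup>2 * v\<^sup>2"
      using zero_le_power2[of "a + 2 * s * v"] by (simp add: power2_eq_square algebra_simps)
    also have "\<dots> \<le> a\<^sup>2 / 2 + 2 * R\<^sup>2 * v\<^sup>2"
      using \<open>s\<^sup>2 \<le> R\<^sup>2\<close> by (simp add: mult_right_mono)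
    finally show ?thesis by (simp add: a_def v_def s_def)
  next
    case False
    then show ?thesis using K(2) by simp
  qed
  have "- 2 * integral\<^sup>L lborel (\<lambda>x. (x \<bullet> e) * u x * partial u e x) \<le>
      integral\<^sup>L lborel (\<lambda>x. (u x)\<^sup>2) / 2 + 2 * R\<^sup>2 * integral\<^sup>L lborel (\<lambda>x. (partial u e x)\<^sup>2)"
  proof -
    have "integral\<^sup>L lborel (\<lambda>x. - 2 * ((x \<bullet> e) * u x * partial u e x)) \<le>
        integral\<^sup>L lborel (\<lambda>x. (u x)\<^sup>2 / 2 + 2 * R\<^sup>2 * (partial u e x)\<^sup>2)"
      by (rule integral_mono) (use i_mixed i_u i_partial pointwise in auto)
    then show ?thesis using i_u i_partial by (simp add: Bochner_Integration.integral_add)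
  qed
  then show ?thesis using sum_eq_0 by linarith
qed

section \<open>The weighted Rayleigh quotient\<close>

lemma integral_ge_on_ball:
  fixes g :: "'a::euclidean_space \<Rightarrow> real"
  assumes "integrable lborel g" "\<And>x. 0 \<le> g x" "\<And>x. x \<in> ball c d \<Longrightarrow> \<epsilon> \<le> g x"
  shows "\<epsilon> * measure lborel (ball c d) \<le> integral\<^sup>L lborel g"
proof -
  have finite: "emeasure lborel (ball c d) < \<infinity>" by (rule emeasure_bounded_finite) simp
  have "integrable lborel (\<lambda>x. indicator (ball c d) x * \<epsilon>)"
    using finite by (intro integrable_mult_left) auto
  then have "integral\<^sup>L lborel (\<lambda>x. indicator (ball c d) x * \<epsilon>) \<le> integral\<^sup>L lborel g"
    by (rule integral_mono[OF _ assms(1)]) (use assms(2,3) in \<open>auto simp: indicator_def\<close>)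
  then show ?thesis using finite by (simp add: mult.commute)
qed

lemma integral_pos_if_continuous_pos:
  fixes g :: "'a::euclidean_space \<Rightarrow> real"
  assumes "integrable lborel g" "\<And>x. 0 \<le> g x" "open W" "continuous_on W g" "x1 \<in> W" "g x1 > 0"
  shows "integral\<^sup>L lborel g > 0"
proof -
  have "(g \<longlongrightarrow> g x1) (at x1)"
    using assms(3-5) continuous_on_eq_continuous_at isCont_def by blast
  then have "eventually (\<lambda>x. g x1 / 2 < g x) (at x1)"
    by (rule order_tendstoD(1)) (use assms(6) in simp)
  then obtain d where d: "d > 0" "\<And>x. x \<noteq> x1 \<Longrightarrow> dist x x1 < d \<Longrightarrow> g x1 / 2 < g x"
    unfolding eventually_at by auto
  have "g x1 / 2 \<le> g x" if "x \<in> ball x1 d" for x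
    using d(2)[of x] that assms(6) by (cases "x = x1") (auto simp: dist_commute)
  then have "g x1 / 2 * measure lborel (ball x1 d) \<le> integral\<^sup>L lborel g"
    by (rule integral_ge_on_ball[OF assms(1,2)])
  moreover have "0 < g x1 / 2 * measure lborel (ball x1 d)"
    using assms(6) d(1) by simp
  ultimately show ?thesis by linarith
qed

definition rayleigh_quotient :: "'a::euclidean_space set \<Rightarrow> ('a \<Rightarrow> real) \<Rightarrow> real \<Rightarrow> ('a \<Rightarrow> real) \<Rightarrow> real"
  where "rayleigh_quotient \<Omega> b p u =
    (LINT x:\<Omega>|lborel. exp (- p * b x) * grad_sq u x) / (LINT x:\<Omega>|lborel. exp (- p * b x) * (u x)\<^sup>2)"

lemma lambda1_eq_INF_rayleigh_quotient:
  "lambda1 \<Omega> b p = (INF u \<in> {u. test_fun \<Omega> u \<and> (\<exists>x. u x \<noteq> 0)}. rayleigh_quotient \<Omega> b p u)"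
  by (simp add: lambda1_def rayleigh_quotient_def)

lemma weighted_integrals_test_fun:
  fixes u :: "'a::euclidean_space \<Rightarrow> real"
  assumes "continuous_on \<Omega> b" "test_fun \<Omega> u"
  shows "(LINT x:\<Omega>|lborel. exp (- p * b x) * (u x)\<^sup>2) = integral\<^sup>L lborel (\<lambda>x. exp (- p * b x) * (u x)\<^sup>2)"
    and "(LINT x:\<Omega>|lborel. exp (- p * b x) * grad_sq u x) =
      integral\<^sup>L lborel (\<lambda>x. exp (- p * b x) * grad_sq u x)"
    and "integrable lborel (\<lambda>x. exp (- p * b x) * (u x)\<^sup>2)"
    and "integrable lborel (\<lambda>x. exp (- p * b x) * grad_sq u x)"
proof -
  obtain L where u: "smooth_fun u" and L: "compact L" "L \<subseteq> \<Omega>" "\<And>x. x \<notin> L \<Longrightarrow> u x = 0"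
    using assms(2) unfolding test_fun_def by auto
  have grad_sq_eq_0: "grad_sq u x = 0" if "x \<notin> L" for x
    using grad_sq_eq_0_outside_support[OF u L(1,3) that] .
  have b: "continuous_on L b" using continuous_on_subset[OF assms(1) L(2)] .
  show "(LINT x:\<Omega>|lborel. exp (- p * b x) * (u x)\<^sup>2) = integral\<^sup>L lborel (\<lambda>x. exp (- p * b x) * (u x)\<^sup>2)"
    "(LINT x:\<Omega>|lborel. exp (- p * b x) * grad_sq u x) = integral\<^sup>L lborel (\<lambda>x. exp (- p * b x) * grad_sq u x)"
    by (rule set_integral_eq_integral_if_zero_outside[OF L(2)]; simp add: L(3) grad_sq_eq_0)+
  have u_cont: "continuous_on L u" and grad_cont: "continuous_on L (grad_sq u)"
    using u by (auto intro: smooth_fun_continuous_on continuous_on_grad_sq)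
  show "integrable lborel (\<lambda>x. exp (- p * b x) * (u x)\<^sup>2)"
    by (rule integrable_compact_support[OF L(1)])
      (auto intro!: continuous_intros b u_cont simp: L(3))
  show "integrable lborel (\<lambda>x. exp (- p * b x) * grad_sq u x)"
    by (rule integrable_compact_support[OF L(1)])
      (auto intro!: continuous_intros b grad_cont simp: grad_sq_eq_0)
qed

text \<open>On the support of \<open>u\<close> the weight \<open>exp(-p b)\<close> varies at most by the factor
  \<open>exp(p (M - m))\<close>, so the unweighted Poincare inequality carries over at that cost.\<close>

lemma rayleigh_quotient_lower_bound:
  fixes \<Omega> :: "'a::euclidean_space set"
  assumes "open \<Omega>" "continuous_on \<Omega> b" "p \<ge> 0"
    and b_bounds: "\<And>x. x \<in> \<Omega> \<Longrightarrow> m \<le> b x \<and> b x \<le> M"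
    and R: "R > 0" "\<And>x. x \<in> \<Omega> \<Longrightarrow> norm x \<le> R"
    and "test_fun \<Omega> u" "u x1 \<noteq> 0"
  shows "exp (- p * (M - m)) / (4 * R\<^sup>2) \<le> rayleigh_quotient \<Omega> b p u"
proof -
  obtain L where u: "smooth_fun u" and L: "compact L" "L \<subseteq> \<Omega>" "\<And>x. x \<notin> L \<Longrightarrow> u x = 0"
    using \<open>test_fun \<Omega> u\<close> unfolding test_fun_def by auto
  note weighted = weighted_integrals_test_fun[OF assms(2) \<open>test_fun \<Omega> u\<close>, of p]
  obtain e :: 'a where e: "e \<in> Basis" using nonempty_Basis by blast
  have partial_eq_0: "partial u e x = 0" and grad_sq_eq_0: "grad_sq u x = 0" if "x \<notin> L" for x
    using partial_eq_0_outside_support[OF u L(1,3) that] grad_sq_eq_0_outside_support[OF u L(1,3) that]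
    by auto
  define A where "A = integral\<^sup>L lborel (\<lambda>x. (u x)\<^sup>2)"
  define B where "B = integral\<^sup>L lborel (\<lambda>x. (partial u e x)\<^sup>2)"
  define Den where "Den = integral\<^sup>L lborel (\<lambda>x. exp (- p * b x) * (u x)\<^sup>2)"
  define Num where "Num = integral\<^sup>L lborel (\<lambda>x. exp (- p * b x) * grad_sq u x)"
  have "x1 \<in> L" using \<open>u x1 \<noteq> 0\<close> L(3) by auto
  then have Den_pos: "Den > 0" unfolding Den_def
    by (intro integral_pos_if_continuous_pos[OF weighted(3) _ \<open>open \<Omega>\<close> _, of x1])
      (use L(2) \<open>u x1 \<noteq> 0\<close> in \<open>auto intro!: continuous_intros assms(2) smooth_fun_continuous_on[OF u]\<close>)
  have "Den \<le> integral\<^sup>L lborel (\<lambda>x. exp (- p * m) * (u x)\<^sup>2)" unfolding Den_def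
  proof (rule integral_mono[OF weighted(3)])
    show "integrable lborel (\<lambda>x. exp (- p * m) * (u x)\<^sup>2)"
      by (auto intro!: integrable_compact_support[OF L(1)] continuous_intros
          smooth_fun_continuous_on[OF u] simp: L(3))
    show "exp (- p * b x) * (u x)\<^sup>2 \<le> exp (- p * m) * (u x)\<^sup>2" for x
      using b_bounds[of x] L \<open>p \<ge> 0\<close> by (cases "x \<in> L") (auto intro!: mult_right_mono mult_left_mono)
  qed
  then have Den_le: "Den \<le> exp (- p * m) * A" by (simp add: A_def)
  have "integral\<^sup>L lborel (\<lambda>x. exp (- p * M) * (partial u e x)\<^sup>2) \<le> Num" unfolding Num_def
  proof (rule integral_mono[OF _ weighted(4)])
    show "integrable lborel (\<lambda>x. exp (- p * M) * (partial u e x)\<^sup>2)"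
      by (auto intro!: integrable_compact_support[OF L(1)] continuous_intros
          smooth_fun_continuous_on[OF smooth_fun_partial[OF u e]] simp: partial_eq_0)
    show "exp (- p * M) * (partial u e x)\<^sup>2 \<le> exp (- p * b x) * grad_sq u x" for x
    proof (cases "x \<in> L")
      case True
      then have "exp (- p * M) \<le> exp (- p * b x)"
        using b_bounds[of x] L(2) \<open>p \<ge> 0\<close> by (auto intro: mult_left_mono)
      then show ?thesis using partial_sq_le_grad_sq[OF e, of u x] by (intro mult_mono) auto
    qed (simp add: partial_eq_0 grad_sq_eq_0)
  qed
  then have Num_ge: "exp (- p * M) * B \<le> Num" by (simp add: B_def)
  have A_le: "A \<le> 4 * R\<^sup>2 * B"
    unfolding A_def B_def by (rule poincare_inequality[OF u L(1,3) e]) (use R(2) L(2) in auto)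
  have "exp (- p * (M - m)) / (4 * R\<^sup>2) * Den \<le> exp (- p * (M - m)) / (4 * R\<^sup>2) * (exp (- p * m) * (4 * R\<^sup>2 * B))"
    using Den_le A_le by (intro mult_left_mono) (auto intro: order_trans mult_left_mono)
  also have "\<dots> = exp (- p * M) * B"
    using R(1) by (simp add: field_simps exp_add[symmetric] algebra_simps)
  finally have "exp (- p * (M - m)) / (4 * R\<^sup>2) * Den \<le> Num" using Num_ge by linarith
  then show ?thesis
    unfolding rayleigh_quotient_def weighted(1,2) Den_def[symmetric] Num_def[symmetric]
    using Den_pos by (simp add: pos_le_divide_eq)
qed

lemma rayleigh_quotient_uniform_lower_bound:
  fixes \<Omega> :: "'a::euclidean_space set"
  assumes "open \<Omega>" "bounded \<Omega>" "continuous_on (closure \<Omega>) b" "p \<ge> 0"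
  obtains c where "c > 0" "\<And>u x. test_fun \<Omega> u \<Longrightarrow> u x \<noteq> 0 \<Longrightarrow> c \<le> rayleigh_quotient \<Omega> b p u"
proof -
  have "bounded (b ` closure \<Omega>)"
    using assms(2,3) by (intro compact_imp_bounded compact_continuous_image) (auto simp: compact_closure)
  then obtain a where "\<And>x. x \<in> closure \<Omega> \<Longrightarrow> \<bar>b x\<bar> \<le> a"
    unfolding bounded_real by auto
  then have a: "\<And>x. x \<in> \<Omega> \<Longrightarrow> - a \<le> b x \<and> b x \<le> a"
    using closure_subset by fastforce
  obtain R where R: "R > 0" "\<And>x. x \<in> \<Omega> \<Longrightarrow> norm x \<le> R"
    using assms(2) bounded_pos by blast
  have b: "continuous_on \<Omega> b" using continuous_on_subset[OF assms(3) closure_subset] .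
  show ?thesis
  proof (rule that)
    show "0 < exp (- p * (a - - a)) / (4 * R\<^sup>2)" using R(1) by simp
    show "exp (- p * (a - - a)) / (4 * R\<^sup>2) \<le> rayleigh_quotient \<Omega> b p u"
      if "test_fun \<Omega> u" "u x \<noteq> 0" for u x
      by (rule rayleigh_quotient_lower_bound[OF assms(1) b assms(4) a R that])
  qed
qed

lemma lambda1_bounds:
  fixes \<Omega> :: "'a::euclidean_space set"
  assumes "open \<Omega>" "bounded \<Omega>" "continuous_on (closure \<Omega>) b" "p \<ge> 0"
    and "test_fun \<Omega> u" "u x \<noteq> 0"
  shows "0 < lambda1 \<Omega> b p" "lambda1 \<Omega> b p \<le> rayleigh_quotient \<Omega> b p u"
proof -
  obtain c where c: "c > 0" "\<And>u x. test_fun \<Omega> u \<Longrightarrow> u x \<noteq> 0 \<Longrightarrow> c \<le> rayleigh_quotient \<Omega> b p u"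
    using rayleigh_quotient_uniform_lower_bound[OF assms(1-4)] by blast
  have u: "u \<in> {u. test_fun \<Omega> u \<and> (\<exists>x. u x \<noteq> 0)}" using assms(5,6) by blast
  have "c \<le> lambda1 \<Omega> b p"
    unfolding lambda1_eq_INF_rayleigh_quotient by (rule cINF_greatest) (use u c(2) in auto)
  then show "0 < lambda1 \<Omega> b p" using c(1) by linarith
  show "lambda1 \<Omega> b p \<le> rayleigh_quotient \<Omega> b p u"
    unfolding lambda1_eq_INF_rayleigh_quotient
    by (rule cINF_lower[OF bdd_belowI2[of _ c] u]) (use c(2) in blast)
qed

lemma rayleigh_quotient_upper_bound:
  fixes \<Omega> :: "'a::euclidean_space set"
  assumes "continuous_on \<Omega> b" "p \<ge> 0" "test_fun \<Omega> u"
    and flat: "\<And>x. x \<in> \<Omega> \<Longrightarrow> b x \<le> \<beta> \<Longrightarrow> grad_sq u x = 0"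
    and ball: "\<delta> > 0" "\<And>x. x \<in> ball x0 \<delta> \<Longrightarrow> u x = 1 \<and> b x \<le> \<alpha>"
  shows "rayleigh_quotient \<Omega> b p u \<le>
    integral\<^sup>L lborel (grad_sq u) / measure lborel (ball x0 \<delta>) * exp (- (\<beta> - \<alpha>) * p)"
proof -
  obtain L where u: "smooth_fun u" and L: "compact L" "L \<subseteq> \<Omega>" "\<And>x. x \<notin> L \<Longrightarrow> u x = 0"
    using assms(3) unfolding test_fun_def by auto
  have grad_sq_eq_0: "grad_sq u x = 0" if "x \<notin> \<Omega>" for x
    using grad_sq_eq_0_outside_support[OF u L(1,3)] L(2) that by blast
  note weighted = weighted_integrals_test_fun[OF assms(1,3), of p]
  define N where "N = integral\<^sup>L lborel (grad_sq u)"
  define \<mu> where "\<mu> = measure lborel (ball x0 \<delta>)"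
  define Den where "Den = integral\<^sup>L lborel (\<lambda>x. exp (- p * b x) * (u x)\<^sup>2)"
  define Num where "Num = integral\<^sup>L lborel (\<lambda>x. exp (- p * b x) * grad_sq u x)"
  have \<mu>: "\<mu> > 0" using ball(1) by (simp add: \<mu>_def)
  have "Num \<le> integral\<^sup>L lborel (\<lambda>x. exp (- p * \<beta>) * grad_sq u x)" unfolding Num_def
  proof (rule integral_mono[OF weighted(4)])
    show "integrable lborel (\<lambda>x. exp (- p * \<beta>) * grad_sq u x)"
      by (auto intro!: integrable_compact_support[OF L(1)] continuous_on_grad_sq[OF u]
          grad_sq_eq_0_outside_support[OF u L(1,3)])
    show "exp (- p * b x) * grad_sq u x \<le> exp (- p * \<beta>) * grad_sq u x" for x
    proof (cases "x \<in> \<Omega> \<and> b x > \<beta>")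
      case True
      then show ?thesis using \<open>p \<ge> 0\<close>
        by (intro mult_right_mono) (auto intro: mult_left_mono grad_sq_nonneg)
    next
      case False
      then have "grad_sq u x = 0" using flat grad_sq_eq_0 by (meson not_less)
      then show ?thesis by simp
    qed
  qed
  then have Num_le: "Num \<le> exp (- p * \<beta>) * N" by (simp add: N_def)
  have Den_ge: "exp (- p * \<alpha>) * \<mu> \<le> Den"
    unfolding Den_def \<mu>_def
    by (rule integral_ge_on_ball[OF weighted(3)]) (use ball(2) \<open>p \<ge> 0\<close> in \<open>auto simp: mult_left_mono\<close>)
  have N: "N \<ge> 0" unfolding N_def by (simp add: grad_sq_nonneg)
  have "rayleigh_quotient \<Omega> b p u = Num / Den"
    unfolding rayleigh_quotient_def weighted(1,2) Num_def Den_def ..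
  also have "\<dots> \<le> exp (- p * \<beta>) * N / (exp (- p * \<alpha>) * \<mu>)"
    using Num_le Den_ge \<mu> N by (intro frac_le) auto
  also have "\<dots> = N / \<mu> * exp (- (\<beta> - \<alpha>) * p)"
    by (simp add: exp_diff exp_minus field_simps)
  finally show ?thesis by (simp add: N_def \<mu>_def)
qed

section \<open>Potential wells\<close>

lemma ball_subset_open_below:
  fixes b :: "'a::metric_space \<Rightarrow> real"
  assumes "isCont b x0" "b x0 < \<alpha>" "open V" "x0 \<in> V"
  obtains \<delta> where "\<delta> > 0" "ball x0 \<delta> \<subseteq> V" "\<And>x. x \<in> ball x0 \<delta> \<Longrightarrow> b x < \<alpha>"
proof -
  have "\<forall>\<^sub>F x in at x0. b x < \<alpha>"
    using assms(1,2) by (intro order_tendstoD(2)) (auto simp: isCont_def)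
  then obtain d1 where d1: "d1 > 0" "\<And>x. x \<noteq> x0 \<Longrightarrow> dist x x0 < d1 \<Longrightarrow> b x < \<alpha>"
    unfolding eventually_at by auto
  obtain d2 where d2: "d2 > 0" "ball x0 d2 \<subseteq> V"
    using open_contains_ball assms(3,4) by blast
  show ?thesis
    by (rule that[of "min d1 d2"]) (use d1 d2 assms(2) in \<open>force simp: dist_commute\<close>)+
qed

text \<open>The sublevel set \<open>{b \<le> \<beta>}\<close> of \<open>closure \<Omega>'\<close> stays away from \<open>frontier \<Omega>'\<close> because
  \<open>\<beta>\<close> lies below the rim of the well; a smooth Urysohn function that is \<open>1\<close> on a
  neighbourhood of it and supported in \<open>\<Omega>'\<close> is flat on all of \<open>{b \<le> \<beta>}\<close>.\<close>

lemma potential_well_test_fun: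
  fixes \<Omega> \<Omega>' :: "'a::euclidean_space set"
  assumes b: "continuous_on (closure \<Omega>) b" and well: "potential_well \<Omega> b \<Omega>'"
    and \<beta>: "(INF x\<in>closure \<Omega>'. b x) \<le> \<beta>" "\<beta> < (INF x\<in>frontier \<Omega>'. b x)"
    and \<alpha>: "(INF x\<in>closure \<Omega>'. b x) < \<alpha>"
  obtains u x0 \<delta> where "test_fun \<Omega> u" "\<And>x. x \<in> \<Omega> \<Longrightarrow> b x \<le> \<beta> \<Longrightarrow> grad_sq u x = 0"
    "\<delta> > 0" "\<And>x. x \<in> ball x0 \<delta> \<Longrightarrow> u x = 1 \<and> b x \<le> \<alpha>"
proof -
  have sub: "\<Omega>' \<subseteq> \<Omega>" and "bounded \<Omega>'" and "open \<Omega>'" and "\<Omega>' \<noteq> {}"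
    using well by (auto simp: potential_well_def lipschitz_domain_def)
  have cpt: "compact (closure \<Omega>')" using \<open>bounded \<Omega>'\<close> by (simp add: compact_closure)
  have b': "continuous_on (closure \<Omega>') b"
    using continuous_on_subset[OF b closure_mono[OF sub]] .
  obtain x0 where x0: "x0 \<in> closure \<Omega>'" "\<And>y. y \<in> closure \<Omega>' \<Longrightarrow> b x0 \<le> b y"
    using continuous_attains_inf[OF cpt _ b'] \<open>\<Omega>' \<noteq> {}\<close> by auto
  have "b x0 = (INF x\<in>closure \<Omega>'. b x)"
    using x0 by (intro antisym cINF_greatest cINF_lower bdd_belowI2[of _ "b x0"]) auto
  then have "b x0 \<le> \<beta>" "b x0 < \<alpha>" using \<beta>(1) \<alpha> by auto
  have rim: "\<beta> < b y" if "y \<in> frontier \<Omega>'" for y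
  proof -
    have "bdd_below (b ` closure \<Omega>')"
      by (rule bounded_imp_bdd_below[OF compact_imp_bounded[OF compact_continuous_image[OF b' cpt]]])
    then have "bdd_below (b ` frontier \<Omega>')"
      by (rule bdd_below_mono) (auto simp: frontier_def)
    then show ?thesis using \<beta>(2) cINF_lower[of b "frontier \<Omega>'" y] that by fastforce
  qed
  define K where "K = closure \<Omega>' \<inter> b -` {..\<beta>}"
  have "closed K" unfolding K_def by (rule continuous_closed_preimage[OF b']) auto
  moreover have "bounded K"
    using bounded_subset[OF bounded_closure[OF \<open>bounded \<Omega>'\<close>]] by (auto simp: K_def)
  ultimately have "compact K" by (simp add: compact_eq_bounded_closed)
  moreover have "K \<subseteq> \<Omega>'"
    using rim by (force simp: K_def frontier_def interior_open[OF \<open>open \<Omega>'\<close>])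
  ultimately obtain u L V where u: "smooth_fun u" and L: "compact L" "L \<subseteq> \<Omega>'" "\<And>x. x \<notin> L \<Longrightarrow> u x = 0"
    and V: "open V" "K \<subseteq> V" "\<And>x. x \<in> V \<Longrightarrow> u x = 1"
    using smooth_urysohn[OF _ \<open>open \<Omega>'\<close>] by metis
  have "x0 \<in> K" using x0(1) \<open>b x0 \<le> \<beta>\<close> by (simp add: K_def)
  then have "x0 \<in> V \<inter> \<Omega>'" using V(2) \<open>K \<subseteq> \<Omega>'\<close> by auto
  moreover have cont_x0: "isCont b x0"
    using continuous_on_subset[OF b' closure_subset] \<open>open \<Omega>'\<close> \<open>x0 \<in> V \<inter> \<Omega>'\<close>
      continuous_on_eq_continuous_at by blast
  ultimately obtain \<delta> where \<delta>: "\<delta> > 0" "ball x0 \<delta> \<subseteq> V" "\<And>x. x \<in> ball x0 \<delta> \<Longrightarrow> b x < \<alpha>"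
    using ball_subset_open_below[OF cont_x0 \<open>b x0 < \<alpha>\<close> V(1)] by blast
  show ?thesis
  proof (rule that)
    show "test_fun \<Omega> u" unfolding test_fun_def using u L sub by blast
    show "grad_sq u x = 0" if "x \<in> \<Omega>" "b x \<le> \<beta>" for x
    proof (cases "x \<in> closure \<Omega>'")
      case True
      then have "x \<in> V" using that V(2) by (auto simp: K_def)
      then show ?thesis by (rule grad_sq_eq_0_if_constant_on_open[OF u V(1) _ V(3)])
    next
      case False
      then have "x \<notin> L" using L(2) closure_subset by blast
      then show ?thesis using grad_sq_eq_0_outside_support[OF u L(1)] L(3) by blast
    qed
    show "\<delta> > 0" by (rule \<delta>(1))
    show "u x = 1 \<and> b x \<le> \<alpha>" if "x \<in> ball x0 \<delta>" for x
      using that \<delta>(2,3) V(3) by force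
  qed
qed

lemma lambda1_le_exp_of_potential_well:
  fixes \<Omega> \<Omega>' :: "'a::euclidean_space set"
  assumes "open \<Omega>" "bounded \<Omega>" "continuous_on (closure \<Omega>) b" "potential_well \<Omega> b \<Omega>'"
    and "0 < \<omega>" "\<omega> < well_depth b \<Omega>'"
  obtains C where "C > 0" "\<And>p. p \<ge> 0 \<Longrightarrow> 0 < lambda1 \<Omega> b p \<and> lambda1 \<Omega> b p \<le> C * exp (- \<omega> * p)"
proof -
  define m B where "m = (INF x\<in>closure \<Omega>'. b x)" and "B = (INF x\<in>frontier \<Omega>'. b x)"
  define \<eta> where "\<eta> = (B - m - \<omega>) / 2"
  have "0 < \<eta>" "\<eta> < B - m" using assms(5,6) by (simp_all add: \<eta>_def well_depth_def m_def B_def)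
  obtain u x0 \<delta> where u: "test_fun \<Omega> u" "\<And>x. x \<in> \<Omega> \<Longrightarrow> b x \<le> B - \<eta> \<Longrightarrow> grad_sq u x = 0"
    and \<delta>: "\<delta> > 0" "\<And>x. x \<in> ball x0 \<delta> \<Longrightarrow> u x = 1 \<and> b x \<le> m + \<eta>"
    by (rule potential_well_test_fun[OF assms(3,4), of "B - \<eta>" "m + \<eta>"])
      (use \<open>0 < \<eta>\<close> \<open>\<eta> < B - m\<close> in \<open>auto simp: m_def B_def\<close>)
  define C where "C = integral\<^sup>L lborel (grad_sq u) / measure lborel (ball x0 \<delta>)"
  have "C \<ge> 0" using \<delta>(1) by (simp add: C_def grad_sq_nonneg)
  show ?thesis
  proof (rule that)
    show "C + 1 > 0" using \<open>C \<ge> 0\<close> by simp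
    fix p :: real
    assume "p \<ge> 0"
    have "u x0 \<noteq> 0" using \<delta> by simp
    note lambda1 = lambda1_bounds[OF assms(1-3) \<open>p \<ge> 0\<close> u(1) this]
    have "rayleigh_quotient \<Omega> b p u \<le> C * exp (- ((B - \<eta>) - (m + \<eta>)) * p)"
      unfolding C_def using continuous_on_subset[OF assms(3) closure_subset]
      by (intro rayleigh_quotient_upper_bound[OF _ \<open>p \<ge> 0\<close> u \<delta>])
    also have "\<dots> = C * exp (- \<omega> * p)" by (simp add: \<eta>_def)
    also have "\<dots> \<le> (C + 1) * exp (- \<omega> * p)" by simp
    finally show "0 < lambda1 \<Omega> b p \<and> lambda1 \<Omega> b p \<le> (C + 1) * exp (- \<omega> * p)"
      using lambda1 by linarith
  qed
qed

lemma Liminf_ln_inverse_div_ge: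
  fixes f :: "real \<Rightarrow> real"
  assumes "d > 0" "\<And>\<omega>. 0 < \<omega> \<Longrightarrow> \<omega> < d \<Longrightarrow> \<exists>C>0. \<forall>p\<ge>0. 0 < f p \<and> f p \<le> C * exp (- \<omega> * p)"
  shows "Liminf at_top (\<lambda>p. ereal (ln (1 / f p) / p)) \<ge> ereal d"
  unfolding le_Liminf_iff
proof (intro allI impI)
  fix y assume "y < ereal d"
  show "\<forall>\<^sub>F p in at_top. y < ereal (ln (1 / f p) / p)"
  proof (cases y)
    case (real y')
    define \<omega> where "\<omega> = (max y' 0 + d) / 2"
    have \<omega>: "0 < \<omega>" "\<omega> < d" "y' < \<omega>"
      using \<open>y < ereal d\<close> real \<open>d > 0\<close> by (auto simp: \<omega>_def)
    obtain C where C: "C > 0" "\<And>p. p \<ge> 0 \<Longrightarrow> 0 < f p \<and> f p \<le> C * exp (- \<omega> * p)"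
      using assms(2)[OF \<omega>(1,2)] by blast
    show ?thesis using eventually_gt_at_top[of "max 0 (ln C / (\<omega> - y'))"]
    proof eventually_elim
      case (elim p)
      then have "p > 0" "p * (\<omega> - y') > ln C"
        using \<omega>(3) by (auto simp: pos_divide_less_eq mult.commute)
      have "0 < f p" "f p \<le> C * exp (- \<omega> * p)" using C(2)[of p] \<open>p > 0\<close> by auto
      then have "ln (f p) \<le> ln (C * exp (- \<omega> * p))" by simp
      also have "\<dots> = ln C - \<omega> * p" using C(1) by (simp add: ln_mult)
      finally have "ln (f p) \<le> ln C - \<omega> * p" .
      then have "y' * p < ln (1 / f p)"
        using \<open>0 < f p\<close> \<open>p * (\<omega> - y') > ln C\<close> by (simp add: ln_div algebra_simps)
      then show ?case using real \<open>p > 0\<close> by (simp add: pos_less_divide_eq)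
    qed
  qed (use \<open>y < ereal d\<close> in auto)
qed

theorem mainTheorem1:
  fixes \<Omega> \<Omega>' :: "'a::euclidean_space set" and b :: "'a \<Rightarrow> real"
  assumes "lipschitz_domain \<Omega>"
    and "W2inf \<Omega> b"
    and "continuous_on (closure \<Omega>) b"
    and "potential_well \<Omega> b \<Omega>'"
  shows "Liminf at_top (\<lambda>p. ereal (ln (1 / lambda1 \<Omega> b p) / p)) \<ge> ereal (well_depth b \<Omega>')
    \<and> (\<forall>\<omega>. 0 < \<omega> \<and> \<omega> < well_depth b \<Omega>' \<longrightarrow>
         (\<exists>C>0. \<forall>p\<ge>0. 0 < lambda1 \<Omega> b p \<and> lambda1 \<Omega> b p \<le> C * exp (- \<omega> * p)))"
proof -
  have \<Omega>: "open \<Omega>" "bounded \<Omega>" using assms(1) by (auto simp: lipschitz_domain_def)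
  have "well_depth b \<Omega>' > 0"
    using assms(4) by (simp add: potential_well_def well_depth_def)
  moreover have bound: "\<exists>C>0. \<forall>p\<ge>0. 0 < lambda1 \<Omega> b p \<and> lambda1 \<Omega> b p \<le> C * exp (- \<omega> * p)"
    if "0 < \<omega>" "\<omega> < well_depth b \<Omega>'" for \<omega>
    using lambda1_le_exp_of_potential_well[OF \<Omega> assms(3,4) that] by metis
  ultimately show ?thesis using Liminf_ln_inverse_div_ge by blast
qed

end
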